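(* Assume the hypotheses of Theorem 3 (see context), and assume moreover that for every $k\in\mathbb{N}$ there exists $j_k\ge k$ with $(\hat y,u_{j_k})\neq0$. Let $k_n$ and $\delta_n'$ be as in the modified discrepancy principle. Then $$\mathbb{P}\left(\sqrt{\sum_{j=\max(k_n,1)}^{m_n}d_{j,n}^2(\bar Y_n-\hat y,u_j)^2}\le\frac{\delta_n'}{2}\right)\to1\quad(n\to\infty).$$
   Context: Setting: $K:\mathcal{X}\to\mathcal{Y}$ compact linear between infinite-dimensional real separable Hilbert spaces, dense range, singular value decomposition $(\sigma_j,u_j,v_j)$ with $\sigma_j>0$ nonincreasing to $0$, $Kv_j=\sigma_ju_j$. Hypotheses of Theorem 3: $\hat y=K\hat x$, $Y_1,Y_2,\dots$ i.i.d. $\mathcal{Y}$-valued with $\mathbb{E}Y_1=\hat y$; $q>p-1>0$, $\sigma_j^2\asymp j^{-q}$, $0<v_j:=\mathbb{E}(Y_1-\hat y,u_j)^2\le C_pj^{-p}$, $\mathbb{E}(Y_1-\hat y,u_j)^4\le Cv_j^2$; $0<\varepsilon_1<1$, $0<\varepsilon_2<\min(1,p-1)$; $\hat x\in\{\sum_j\sigma_j^\nu(\xi,v_j)v_j:\|\xi\|\le\rho\}$ with $\nu,\rho>0$. Modified discrepancy principle: $\bar Y_n:=\frac1n\sum_{i\le n}Y_i$, $m_n:=\lfloor n^{1-\varepsilon_1}\rfloor$, $s_{j,n}^2:=\frac1{n-1}\sum_{i=1}^n(Y_i-\bar Y_n,u_j)^2$, $S_n:=\sum_{j'=1}^{m_n}s_{j',n}^2$,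 $d_{1,n}:=\sqrt{\min(S_n/s_{1,n}^2,1/\sigma_1^2)}$, $d_{j,n}:=\sqrt{\min(j^{-(1+\varepsilon_2)}S_n/s_{j,n}^2,\ \sigma_{j-1}^2d_{j-1,n}^2/\sigma_j^2)}$ for $2\le j\le m_n$, $\delta_n':=\sqrt{\frac1n\sum_{j=1}^{m_n}d_{j,n}^2s_{j,n}^2}$, and $k_n:=\min\{k\in\{0,\dots,m_n\}:\sqrt{\sum_{j=k+1}^{m_n}d_{j,n}^2(\bar Y_n,u_j)^2}\le\delta_n'\}$. *)

theory Defs
  imports "HOL-Probability.Probability"
begin

definition compact_op :: "('a::real_normed_vector \<Rightarrow> 'b::real_normed_vector) \<Rightarrow> bool" where
  "compact_op K \<longleftrightarrow> linear K \<and> (\<forall>B. bounded B \<longrightarrow> compact (closure (K ` B)))"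

definition orthonormal_seq :: "(nat \<Rightarrow> 'a::real_inner) \<Rightarrow> bool" where
  "orthonormal_seq e \<longleftrightarrow> (\<forall>i\<ge>1. \<forall>j\<ge>1. inner (e i) (e j) = (if i = j then 1 else 0))"

text \<open>Modified discrepancy principle. The argument ys is the sample Y_1, Y_2, ... (index 0 unused);
  u are the left singular vectors, sv the singular values (both indexed from 1).\<close>

definition mdp_Ybar :: "(nat \<Rightarrow> 'a::real_vector) \<Rightarrow> nat \<Rightarrow> 'a" where
  "mdp_Ybar ys n = (1 / real n) *\<^sub>R (\<Sum>i=1..n. ys i)"

definition mdp_m :: "real \<Rightarrow> nat \<Rightarrow> nat" where
  "mdp_m eps1 n = nat \<lfloor>real n powr (1 - eps1)\<rfloor>"

definition mdp_s2 :: "(nat \<Rightarrow> 'a::real_inner) \<Rightarrow> (nat \<Rightarrow> 'a) \<Rightarrow> nat \<Rightarrow> nat \<Rightarrow> real" where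
  "mdp_s2 u ys n j = (1 / (real n - 1)) * (\<Sum>i=1..n. (inner (ys i - mdp_Ybar ys n) (u j))\<^sup>2)"

definition mdp_S :: "real \<Rightarrow> (nat \<Rightarrow> 'a::real_inner) \<Rightarrow> (nat \<Rightarrow> 'a) \<Rightarrow> nat \<Rightarrow> real" where
  "mdp_S eps1 u ys n = (\<Sum>j'=1..mdp_m eps1 n. mdp_s2 u ys n j')"

text \<open>min(a/b, c) with the convention a/0 = +infinity (so the minimum is then c).\<close>
definition min_div :: "real \<Rightarrow> real \<Rightarrow> real \<Rightarrow> real" where
  "min_div a b c = (if b = 0 then c else min (a / b) c)"

text \<open>mdp_d ... n j = d_{j,n}, defined recursively for j \<ge> 1 (value at j = 0 unused).\<close>
fun mdp_d :: "real \<Rightarrow> real \<Rightarrow> (nat \<Rightarrow> real) \<Rightarrow> (nat \<Rightarrow> 'a::real_inner) \<Rightarrow> (nat \<Rightarrow> 'a) \<Rightarrow> nat \<Rightarrow> nat \<Rightarrow> real" where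
  "mdp_d eps1 eps2 sv u ys n 0 = 0"
| "mdp_d eps1 eps2 sv u ys n (Suc j) =
     (if j = 0 then
        sqrt (min_div (mdp_S eps1 u ys n) (mdp_s2 u ys n 1) (1 / (sv 1)\<^sup>2))
      else
        sqrt (min_div (real (Suc j) powr (-(1 + eps2)) * mdp_S eps1 u ys n) (mdp_s2 u ys n (Suc j))
                ((sv j)\<^sup>2 * (mdp_d eps1 eps2 sv u ys n j)\<^sup>2 / (sv (Suc j))\<^sup>2)))"

definition mdp_delta' :: "real \<Rightarrow> real \<Rightarrow> (nat \<Rightarrow> real) \<Rightarrow> (nat \<Rightarrow> 'a::real_inner) \<Rightarrow> (nat \<Rightarrow> 'a) \<Rightarrow> nat \<Rightarrow> real" where
  "mdp_delta' eps1 eps2 sv u ys n =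
     sqrt ((1 / real n) * (\<Sum>j=1..mdp_m eps1 n. (mdp_d eps1 eps2 sv u ys n j)\<^sup>2 * mdp_s2 u ys n j))"

definition mdp_k :: "real \<Rightarrow> real \<Rightarrow> (nat \<Rightarrow> real) \<Rightarrow> (nat \<Rightarrow> 'a::real_inner) \<Rightarrow> (nat \<Rightarrow> 'a) \<Rightarrow> nat \<Rightarrow> nat" where
  "mdp_k eps1 eps2 sv u ys n =
     (LEAST k. k \<le> mdp_m eps1 n \<and>
        sqrt (\<Sum>j=k+1..mdp_m eps1 n. (mdp_d eps1 eps2 sv u ys n j)\<^sup>2 * (inner (mdp_Ybar ys n) (u j))\<^sup>2)
          \<le> mdp_delta' eps1 eps2 sv u ys n)"

end

theory Submission
  imports Defs
begin

(* Work on the event where, for every j <= m_n, the empirical mean and mean square of the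
   coordinates (Y_i - yhat, u_j) are within a constant factor of their expectations, and where a
   weighted tail T_K of the squared coordinate means, starting at a fixed index K, is O(1/n).
   There everything is deterministic: s_{j,n}^2 is comparable to v_j, so S_n is bounded above and
   below and delta_n'^2 is of exact order 1/n; the weights d_{j,n}^2 stay bounded below up to a
   fixed J >= K with (yhat, u_J) <> 0, which forces k_n >= J for large n; and the sum from k_n on
   is then at most S_n T_K <= delta_n'^2 / 4. By Chebyshev and Markov, the complement of the event
   has probability O(m_n / n) + O(1 / n) + O(sum_{j >= K} j^-(1 + eps2)), which is small once K is
   chosen large, since m_n / n = O(n^-eps1). *)

lemma (in prob_space) integral_square_sum_indep:
  fixes Z :: "'i \<Rightarrow> 'a \<Rightarrow> real"
  assumes indep: "indep_vars (\<lambda>_. borel) Z I" and F: "finite F" "F \<subseteq> I"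
    and square_int: "\<And>i. i \<in> F \<Longrightarrow> integrable M (\<lambda>w. (Z i w)\<^sup>2)"
    and centered: "\<And>i. i \<in> F \<Longrightarrow> (\<integral>w. Z i w \<partial>M) = 0"
  shows "integrable M (\<lambda>w. (\<Sum>i\<in>F. Z i w)\<^sup>2)"
    and "(\<integral>w. (\<Sum>i\<in>F. Z i w)\<^sup>2 \<partial>M) = (\<Sum>i\<in>F. \<integral>w. (Z i w)\<^sup>2 \<partial>M)"
proof -
  have int: "integrable M (Z i)" if "i \<in> F" for i
  proof (rule square_integrable_imp_integrable)
    show "Z i \<in> borel_measurable M" using indep F that unfolding indep_vars_def by blast
  qed (rule square_int[OF that])
  have cross: "integrable M (\<lambda>w. Z i w * Z k w) \<and>
      (\<integral>w. Z i w * Z k w \<partial>M) = (if i = k then \<integral>w. (Z i w)\<^sup>2 \<partial>M else 0)"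
    if "i \<in> F" "k \<in> F" for i k
  proof (cases "i = k")
    case True
    then show ?thesis using square_int[OF that(1)] by (simp add: power2_eq_square)
  next
    case False
    have indep_ik: "indep_vars (\<lambda>_. borel) Z {i, k}"
      using F that by (intro indep_vars_subset[OF indep]) auto
    have int_ik: "\<And>l. l \<in> {i, k} \<Longrightarrow> integrable M (Z l)" using int that by auto
    show ?thesis
      using indep_vars_lebesgue_integral[OF _ indep_ik int_ik] indep_vars_integrable[OF _ indep_ik int_ik]
        centered that False by simp
  qed
  have square_sum: "(\<lambda>w. (\<Sum>i\<in>F. Z i w)\<^sup>2) = (\<lambda>w. \<Sum>i\<in>F. \<Sum>k\<in>F. Z i w * Z k w)"
    by (simp add: power2_eq_square sum_product)
  show "integrable M (\<lambda>w. (\<Sum>i\<in>F. Z i w)\<^sup>2)"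
    unfolding square_sum using cross by (intro Bochner_Integration.integrable_sum) auto
  have "(\<integral>w. (\<Sum>i\<in>F. \<Sum>k\<in>F. Z i w * Z k w) \<partial>M) = (\<Sum>i\<in>F. \<Sum>k\<in>F. \<integral>w. Z i w * Z k w \<partial>M)"
    using cross by (simp add: Bochner_Integration.integrable_sum)
  also have "\<dots> = (\<Sum>i\<in>F. \<integral>w. (Z i w)\<^sup>2 \<partial>M)"
    using cross F by (simp add: sum.delta cong: sum.cong)
  finally show "(\<integral>w. (\<Sum>i\<in>F. Z i w)\<^sup>2 \<partial>M) = (\<Sum>i\<in>F. \<integral>w. (Z i w)\<^sup>2 \<partial>M)"
    unfolding square_sum .
qed

lemma scaled_sample_variance_bounds:
  fixes n :: nat and a x v :: real
  assumes n: "n \<ge> 2" and a: "\<bar>a - v\<bar> < v / 4" and x: "x\<^sup>2 < v / 8"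
  shows "v / 2 \<le> real n / (real n - 1) * (a - x\<^sup>2)"
    and "real n / (real n - 1) * (a - x\<^sup>2) \<le> 5 / 2 * v"
proof -
  have factor: "1 \<le> real n / (real n - 1)" "real n / (real n - 1) \<le> 2"
    using n by (auto simp: field_simps)
  have lower: "5 / 8 * v \<le> a - x\<^sup>2" and upper: "a - x\<^sup>2 \<le> 5 / 4 * v"
    using a x zero_le_power2[of x] by linarith+
  have v: "0 \<le> v" using a by linarith
  have "v / 2 \<le> 1 * (5 / 8 * v)" using v by simp
  also have "\<dots> \<le> real n / (real n - 1) * (a - x\<^sup>2)"
    using factor lower v by (intro mult_mono) auto
  finally show "v / 2 \<le> real n / (real n - 1) * (a - x\<^sup>2)" .
  have "real n / (real n - 1) * (a - x\<^sup>2) \<le> 2 * (5 / 4 * v)"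
    using factor lower upper v by (intro mult_mono) auto
  then show "real n / (real n - 1) * (a - x\<^sup>2) \<le> 5 / 2 * v" by simp
qed

lemma min_div_nonneg: "0 \<le> a \<Longrightarrow> 0 \<le> b \<Longrightarrow> 0 \<le> c \<Longrightarrow> 0 \<le> min_div a b c"
  by (simp add: min_div_def)

lemma mdp_s2_nonneg: "0 \<le> mdp_s2 u ys n j"
proof (cases "n = 0")
  case False
  then show ?thesis unfolding mdp_s2_def by (intro mult_nonneg_nonneg sum_nonneg) auto
qed (simp add: mdp_s2_def)

lemma mdp_S_nonneg: "0 \<le> mdp_S e1 u ys n"
  unfolding mdp_S_def by (intro sum_nonneg mdp_s2_nonneg)

lemma mdp_d_sq:
  "(mdp_d e1 e2 sv u ys n (Suc j))\<^sup>2 =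
     (if j = 0 then min_div (mdp_S e1 u ys n) (mdp_s2 u ys n 1) (1 / (sv 1)\<^sup>2)
      else min_div (real (Suc j) powr (-(1 + e2)) * mdp_S e1 u ys n) (mdp_s2 u ys n (Suc j))
             ((sv j)\<^sup>2 * (mdp_d e1 e2 sv u ys n j)\<^sup>2 / (sv (Suc j))\<^sup>2))"
  by (simp add: min_div_nonneg mdp_S_nonneg mdp_s2_nonneg)

lemma mdp_d_sq_mult_s2_le:
  assumes "j \<ge> 1"
  shows "(mdp_d e1 e2 sv u ys n j)\<^sup>2 * mdp_s2 u ys n j \<le> real j powr (-(1 + e2)) * mdp_S e1 u ys n"
proof -
  obtain i where j: "j = Suc i" using assms by (cases j) auto
  show ?thesis
    using mdp_s2_nonneg[of u ys n j] mdp_S_nonneg[of e1 u ys n]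
    unfolding j mdp_d_sq by (auto simp: min_div_def min_mult_distrib_right)
qed

lemma mdp_d_sq_le:
  assumes "j \<ge> 1" and "mdp_s2 u ys n j > 0"
  shows "(mdp_d e1 e2 sv u ys n j)\<^sup>2 \<le> real j powr (-(1 + e2)) * mdp_S e1 u ys n / mdp_s2 u ys n j"
  using mdp_d_sq_mult_s2_le[OF assms(1)] assms(2) by (simp add: pos_le_divide_eq)

(* The cap sv (j-1)^2 d_{j-1}^2 / sv j^2 is at least d_{j-1}^2 since sv is nonincreasing, so the
   lower bound coming from the first branch of the minimum propagates along j. *)
lemma mdp_d_sq_ge:
  assumes j: "j \<ge> 1" and c: "c \<ge> 0" and e2: "0 \<le> 1 + e2"
    and s2: "\<And>i. 1 \<le> i \<Longrightarrow> i \<le> j \<Longrightarrow> mdp_s2 u ys n i > 0 \<and> c \<le> mdp_S e1 u ys n / mdp_s2 u ys n i"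
    and sv_pos: "\<And>i. 1 \<le> i \<Longrightarrow> sv i > 0" and sv_mono: "\<And>i. 1 \<le> i \<Longrightarrow> sv (Suc i) \<le> sv i"
  shows "min (real j powr (-(1 + e2)) * c) (1 / (sv 1)\<^sup>2) \<le> (mdp_d e1 e2 sv u ys n j)\<^sup>2"
  using j s2
proof (induction j)
  case (Suc j)
  show ?case
  proof (cases "j = 0")
    case True
    then show ?thesis using Suc.prems(2)[of 1] unfolding mdp_d_sq by (auto simp: min_div_def)
  next
    case False
    let ?d = "(mdp_d e1 e2 sv u ys n j)\<^sup>2"
    have IH: "min (real j powr (-(1 + e2)) * c) (1 / (sv 1)\<^sup>2) \<le> ?d"
      using False Suc.prems by (intro Suc.IH) auto
    have s2_pos: "mdp_s2 u ys n (Suc j) > 0" and ratio: "c \<le> mdp_S e1 u ys n / mdp_s2 u ys n (Suc j)"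
      using Suc.prems(2)[of "Suc j"] by auto
    have "(sv (Suc j))\<^sup>2 \<le> (sv j)\<^sup>2"
      using sv_pos[of "Suc j"] sv_mono[of j] False by (intro power_mono) auto
    then have "?d * (sv (Suc j))\<^sup>2 \<le> (sv j)\<^sup>2 * ?d"
      by (metis mult.commute mult_right_mono zero_le_power2)
    then have "?d \<le> (sv j)\<^sup>2 * ?d / (sv (Suc j))\<^sup>2"
      using sv_pos[of "Suc j"] by (simp add: le_divide_eq)
    moreover have "real (Suc j) powr (-(1 + e2)) * c
        \<le> real (Suc j) powr (-(1 + e2)) * mdp_S e1 u ys n / mdp_s2 u ys n (Suc j)"
      using mult_left_mono[OF ratio, of "real (Suc j) powr (-(1 + e2))"] by simp
    moreover have "real (Suc j) powr (-(1 + e2)) * c \<le> real j powr (-(1 + e2)) * c"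
      using False e2 c by (intro mult_right_mono powr_mono2') auto
    ultimately show ?thesis
      using IH False s2_pos unfolding mdp_d_sq by (auto simp: min_div_def)
  qed
qed simp

lemma inner_mdp_Ybar_minus:
  assumes "n \<ge> 1"
  shows "inner (mdp_Ybar ys n - c) w = (1 / real n) * (\<Sum>i=1..n. inner (ys i - c) w)"
  using assms by (simp add: mdp_Ybar_def inner_diff_left inner_sum_left sum_subtractf field_simps)

lemma mdp_s2_eq:
  assumes n: "n \<ge> 2"
  shows "mdp_s2 u ys n j = real n / (real n - 1) *
     ((1 / real n) * (\<Sum>i=1..n. (inner (ys i - c) (u j))\<^sup>2) - (inner (mdp_Ybar ys n - c) (u j))\<^sup>2)"
proof -
  define xb where "xb = inner (mdp_Ybar ys n - c) (u j)"
  define x where "x i = inner (ys i - c) (u j)" for i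
  have sum_x: "(\<Sum>i=1..n. x i) = n * xb"
    using inner_mdp_Ybar_minus[of n ys c "u j"] n by (simp add: xb_def x_def)
  have "inner (ys i - mdp_Ybar ys n) (u j) = x i - xb" for i
    by (simp add: x_def xb_def inner_diff_left)
  then have "(\<Sum>i=1..n. (inner (ys i - mdp_Ybar ys n) (u j))\<^sup>2) = (\<Sum>i=1..n. (x i - xb)\<^sup>2)"
    by simp
  also have "\<dots> = (\<Sum>i=1..n. (x i)\<^sup>2) - 2 * xb * (\<Sum>i=1..n. x i) + n * xb\<^sup>2"
    by (simp add: power2_diff sum.distrib sum_subtractf sum_distrib_left mult_ac)
  also have "\<dots> = (\<Sum>i=1..n. (x i)\<^sup>2) - n * xb\<^sup>2"
    unfolding sum_x by (simp add: power2_eq_square)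
  finally have "mdp_s2 u ys n j = ((\<Sum>i=1..n. (x i)\<^sup>2) - n * xb\<^sup>2) / (real n - 1)"
    unfolding mdp_s2_def by simp
  also have "\<dots> = real n / (real n - 1) * ((1 / real n) * (\<Sum>i=1..n. (x i)\<^sup>2) - xb\<^sup>2)"
    using n by (simp add: field_simps)
  finally show ?thesis unfolding x_def xb_def .
qed

lemma mdp_delta'_nonneg: "0 \<le> mdp_delta' e1 e2 sv u ys n"
  unfolding mdp_delta'_def by (simp add: sum_nonneg mdp_s2_nonneg)

lemma mdp_delta'_sq:
  "(mdp_delta' e1 e2 sv u ys n)\<^sup>2 = (1 / real n) * (\<Sum>j=1..mdp_m e1 n. (mdp_d e1 e2 sv u ys n j)\<^sup>2 * mdp_s2 u ys n j)"
  unfolding mdp_delta'_def by (simp add: sum_nonneg mdp_s2_nonneg)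

lemma mdp_k_ge:
  assumes J: "J \<le> mdp_m e1 n"
    and big: "(mdp_delta' e1 e2 sv u ys n)\<^sup>2 < (mdp_d e1 e2 sv u ys n J)\<^sup>2 * (inner (mdp_Ybar ys n) (u J))\<^sup>2"
  shows "J \<le> mdp_k e1 e2 sv u ys n"
proof (rule ccontr)
  let ?m = "mdp_m e1 n" and ?\<delta> = "mdp_delta' e1 e2 sv u ys n"
  let ?r = "\<lambda>k. \<Sum>j=k+1..?m. (mdp_d e1 e2 sv u ys n j)\<^sup>2 * (inner (mdp_Ybar ys n) (u j))\<^sup>2"
  let ?P = "\<lambda>k. k \<le> ?m \<and> sqrt (?r k) \<le> ?\<delta>"
  assume "\<not> J \<le> mdp_k e1 e2 sv u ys n"
  then have k: "mdp_k e1 e2 sv u ys n < J" by simp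
  have "?P ?m" using mdp_delta'_nonneg[of e1 e2 sv u ys n] by simp
  then have "?P (mdp_k e1 e2 sv u ys n)" unfolding mdp_k_def by (rule LeastI)
  moreover have "(mdp_d e1 e2 sv u ys n J)\<^sup>2 * (inner (mdp_Ybar ys n) (u J))\<^sup>2 \<le> ?r (mdp_k e1 e2 sv u ys n)"
    using k J by (intro member_le_sum) auto
  then have "sqrt (?\<delta>\<^sup>2) < sqrt (?r (mdp_k e1 e2 sv u ys n))"
    using big by (intro real_sqrt_less_mono) linarith
  ultimately show False using mdp_delta'_nonneg[of e1 e2 sv u ys n] by simp
qed

lemma mdp_m_div_le:
  assumes "n \<ge> 1"
  shows "real (mdp_m e1 n) / n \<le> real n powr (-e1)"
proof -
  have "real (mdp_m e1 n) \<le> real n powr (1 - e1)"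
    unfolding mdp_m_def by simp
  also have "\<dots> = real n * real n powr (-e1)"
    using assms by (simp add: powr_diff powr_minus divide_inverse)
  finally show ?thesis using assms by (simp add: field_simps mult.commute)
qed

lemma eventually_le_mdp_m:
  assumes "e1 < 1"
  shows "\<forall>\<^sub>F n in sequentially. J \<le> mdp_m e1 n"
proof -
  have "((\<lambda>n. real n powr (-(1 - e1))) \<longlongrightarrow> 0) sequentially"
    using assms by (intro tendsto_neg_powr filterlim_real_sequentially) auto
  then have "\<forall>\<^sub>F n in sequentially. real n powr (-(1 - e1)) < 1 / (real J + 1)"
    by (intro order_tendstoD(2)) auto
  moreover have "\<forall>\<^sub>F n in sequentially. n \<ge> 1" by (rule eventually_ge_at_top)
  ultimately show ?thesis
  proof eventually_elim
    case (elim n)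
    have "real n powr (-(1 - e1)) = inverse (real n powr (1 - e1))" by (rule powr_minus)
    then have "inverse (real n powr (1 - e1)) < 1 / (real J + 1)"
      using elim(1) by simp
    then have "real J + 1 < real n powr (1 - e1)"
      using elim by (simp add: field_simps)
    then show "J \<le> mdp_m e1 n"
      unfolding mdp_m_def by (intro le_nat_floor) simp
  qed
qed

locale mdp_sample = prob_space M for M :: "'w measure" +
  fixes Y :: "nat \<Rightarrow> 'w \<Rightarrow> 'y::{real_inner, banach, second_countable_topology}"
    and u :: "nat \<Rightarrow> 'y" and yhat :: 'y and C :: real
  assumes Y_rv: "\<And>i. i \<ge> 1 \<Longrightarrow> Y i \<in> borel_measurable M"
    and Y_indep: "indep_vars (\<lambda>_. borel) Y {1..}"
    and Y_ident: "\<And>i. i \<ge> 1 \<Longrightarrow> distr M borel (Y i) = distr M borel (Y 1)"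
    and Y_int: "integrable M (Y 1)"
    and Y_mean: "integral\<^sup>L M (Y 1) = yhat"
    and fourth_int: "\<And>j. j \<ge> 1 \<Longrightarrow> integrable M (\<lambda>w. (inner (Y 1 w - yhat) (u j)) ^ 4)"
    and fourth_bound: "\<And>j. j \<ge> 1 \<Longrightarrow> (\<integral>w. (inner (Y 1 w - yhat) (u j)) ^ 4 \<partial>M)
                         \<le> C * (\<integral>w. (inner (Y 1 w - yhat) (u j))\<^sup>2 \<partial>M)\<^sup>2"
begin

definition X :: "nat \<Rightarrow> nat \<Rightarrow> 'w \<Rightarrow> real" where
  "X j i w = inner (Y i w - yhat) (u j)"

definition v :: "nat \<Rightarrow> real" where
  "v j = (\<integral>w. (X j 1 w)\<^sup>2 \<partial>M)"

definition Xbar :: "nat \<Rightarrow> nat \<Rightarrow> 'w \<Rightarrow> real" where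
  "Xbar j n w = (1 / real n) * (\<Sum>i=1..n. X j i w)"

definition mean_sq :: "nat \<Rightarrow> nat \<Rightarrow> 'w \<Rightarrow> real" where
  "mean_sq j n w = (1 / real n) * (\<Sum>i=1..n. (X j i w)\<^sup>2)"

lemma X_measurable [measurable]: "i \<ge> 1 \<Longrightarrow> X j i \<in> borel_measurable M"
  unfolding X_def[abs_def] using Y_rv by measurable

lemma Xbar_measurable [measurable]: "Xbar j n \<in> borel_measurable M"
  unfolding Xbar_def[abs_def] by measurable

lemma mean_sq_measurable [measurable]: "mean_sq j n \<in> borel_measurable M"
  unfolding mean_sq_def[abs_def] by measurable

lemma v_nonneg: "0 \<le> v j"
  unfolding v_def by simp

lemma
  fixes h :: "'y \<Rightarrow> real"
  assumes h: "h \<in> borel_measurable borel" and i: "i \<ge> 1"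
  shows integrable_Y_iff: "integrable M (\<lambda>w. h (Y i w)) \<longleftrightarrow> integrable M (\<lambda>w. h (Y 1 w))"
    and integral_Y_eq: "(\<integral>w. h (Y i w) \<partial>M) = (\<integral>w. h (Y 1 w) \<partial>M)"
  using integrable_distr_eq[OF Y_rv[OF i] h] integrable_distr_eq[OF Y_rv h]
    integral_distr[OF Y_rv[OF i] h] integral_distr[OF Y_rv h] Y_ident[OF i] by simp_all

lemma X_indep: "indep_vars (\<lambda>_. borel) (X j) {1..}"
proof -
  have "indep_vars (\<lambda>_. borel) (\<lambda>i w. (\<lambda>y. inner (y - yhat) (u j)) (Y i w)) {1..}"
    by (rule indep_vars_compose2[OF Y_indep]) measurable
  then show ?thesis by (simp add: X_def[abs_def])
qed

lemma integral_X1: "(\<integral>w. X j 1 w \<partial>M) = 0"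
proof -
  have "X j 1 = (\<lambda>w. inner (Y 1 w) (u j) - inner yhat (u j))"
    by (simp add: X_def[abs_def] inner_diff_left)
  then show ?thesis
    using Y_int Y_mean by (simp add: prob_space)
qed

lemma integrable_X1_sq: "j \<ge> 1 \<Longrightarrow> integrable M (\<lambda>w. (X j 1 w)\<^sup>2)"
proof (rule Bochner_Integration.integrable_bound[of _ "\<lambda>w. 1 + (X j 1 w) ^ 4"])
  assume "j \<ge> 1"
  then show "integrable M (\<lambda>w. 1 + (X j 1 w) ^ 4)"
    using fourth_int by (simp add: X_def)
  have "s \<le> 1 + s\<^sup>2" for s :: real
  proof (cases "s \<le> 1")
    case False
    then have "s * 1 \<le> s * s" by (intro mult_left_mono) auto
    then show ?thesis by (simp add: power2_eq_square)
  qed (simp add: add_increasing2)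
  then have "(X j 1 w)\<^sup>2 \<le> 1 + ((X j 1 w)\<^sup>2)\<^sup>2" for w .
  then show "AE w in M. norm ((X j 1 w)\<^sup>2) \<le> norm (1 + (X j 1 w) ^ 4)"
    by (simp add: power_mult[symmetric])
qed measurable

lemma
  assumes j: "j \<ge> 1" and i: "i \<ge> 1"
  shows integrable_X_sq: "integrable M (\<lambda>w. (X j i w)\<^sup>2)"
    and integrable_X_pow4: "integrable M (\<lambda>w. (X j i w) ^ 4)"
    and integral_X: "(\<integral>w. X j i w \<partial>M) = 0"
    and integral_X_sq: "(\<integral>w. (X j i w)\<^sup>2 \<partial>M) = v j"
    and integral_X_pow4_le: "(\<integral>w. (X j i w) ^ 4 \<partial>M) \<le> C * (v j)\<^sup>2"
proof -
  have h: "(\<lambda>y. (inner (y - yhat) (u j)) ^ k) \<in> borel_measurable borel" for k :: nat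
    by measurable
  note pow = integrable_Y_iff[OF h i] integral_Y_eq[OF h i]
  have h1: "(\<lambda>y. inner (y - yhat) (u j)) \<in> borel_measurable borel"
    by measurable
  show "integrable M (\<lambda>w. (X j i w)\<^sup>2)"
    using pow(1)[of 2] integrable_X1_sq[OF j] by (simp add: X_def)
  show "integrable M (\<lambda>w. (X j i w) ^ 4)"
    using pow(1)[of 4] fourth_int[OF j] by (simp add: X_def)
  show "(\<integral>w. X j i w \<partial>M) = 0"
    using integral_Y_eq[OF h1 i] integral_X1[of j] by (simp add: X_def)
  show "(\<integral>w. (X j i w)\<^sup>2 \<partial>M) = v j"
    using pow(2)[of 2] by (simp add: X_def v_def)
  show "(\<integral>w. (X j i w) ^ 4 \<partial>M) \<le> C * (v j)\<^sup>2"
    using pow(2)[of 4] fourth_bound[OF j] by (simp add: X_def v_def)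
qed

lemma
  assumes j: "j \<ge> 1" and n: "n \<ge> 1"
  shows integrable_Xbar_sq: "integrable M (\<lambda>w. (Xbar j n w)\<^sup>2)"
    and integral_Xbar_sq: "(\<integral>w. (Xbar j n w)\<^sup>2 \<partial>M) = v j / n"
proof -
  note sum_sq = integral_square_sum_indep[OF X_indep, of "{1..n}"]
  have Xbar_sq: "(\<lambda>w. (Xbar j n w)\<^sup>2) = (\<lambda>w. (1 / real n)\<^sup>2 * (\<Sum>i\<in>{1..n}. X j i w)\<^sup>2)"
    by (simp add: Xbar_def power_divide)
  show "integrable M (\<lambda>w. (Xbar j n w)\<^sup>2)"
    unfolding Xbar_sq using sum_sq j by (simp add: integrable_X_sq integral_X)
  have "(\<integral>w. (\<Sum>i\<in>{1..n}. X j i w)\<^sup>2 \<partial>M) = (\<Sum>i\<in>{1..n}. v j)"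
    using sum_sq(2) j by (simp add: integrable_X_sq integral_X integral_X_sq)
  then show "(\<integral>w. (Xbar j n w)\<^sup>2 \<partial>M) = v j / n"
    unfolding Xbar_sq using n by (simp add: power2_eq_square field_simps)
qed

lemma
  assumes j: "j \<ge> 1" and n: "n \<ge> 1"
  shows integrable_mean_sq_dev: "integrable M (\<lambda>w. (mean_sq j n w - v j)\<^sup>2)"
    and integral_mean_sq_dev_le: "(\<integral>w. (mean_sq j n w - v j)\<^sup>2 \<partial>M) \<le> C * (v j)\<^sup>2 / n"
proof -
  define Z where "Z i w = (X j i w)\<^sup>2 - v j" for i w
  have Z_indep: "indep_vars (\<lambda>_. borel) Z {1..}"
  proof -
    have "indep_vars (\<lambda>_. borel) (\<lambda>i w. (\<lambda>x. x\<^sup>2 - v j) (X j i w)) {1..}"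
      by (rule indep_vars_compose2[OF X_indep]) measurable
    then show ?thesis by (simp add: Z_def[abs_def])
  qed
  have Z_sq: "(\<lambda>w. (Z i w)\<^sup>2) = (\<lambda>w. (X j i w) ^ 4 - 2 * v j * (X j i w)\<^sup>2 + (v j)\<^sup>2)" for i
    by (simp add: Z_def fun_eq_iff power2_diff power_mult[symmetric])
  have int_Z_sq: "integrable M (\<lambda>w. (Z i w)\<^sup>2)" if "i \<ge> 1" for i
    unfolding Z_sq using j that by (simp add: integrable_X_sq integrable_X_pow4)
  have Z_sq_eq: "(\<integral>w. (Z i w)\<^sup>2 \<partial>M) = (\<integral>w. (X j i w) ^ 4 \<partial>M) - (v j)\<^sup>2" if "i \<ge> 1" for i
    unfolding Z_sq using j that
    by (simp add: integrable_X_sq integrable_X_pow4 integral_X_sq prob_space) (simp add: power2_eq_square)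
  have integral_Z_sq: "(\<integral>w. (Z i w)\<^sup>2 \<partial>M) \<le> C * (v j)\<^sup>2" if "i \<ge> 1" for i
    using integral_X_pow4_le[OF j that] Z_sq_eq[OF that] zero_le_power2[of "v j"] by linarith
  have integral_Z: "(\<integral>w. Z i w \<partial>M) = 0" if "i \<ge> 1" for i
    using j that by (simp add: Z_def integrable_X_sq integral_X_sq prob_space)
  note sum_sq = integral_square_sum_indep[OF Z_indep, of "{1..n}"]
  have dev_sq: "(\<lambda>w. (mean_sq j n w - v j)\<^sup>2) = (\<lambda>w. (1 / real n)\<^sup>2 * (\<Sum>i\<in>{1..n}. Z i w)\<^sup>2)"
    using n by (simp add: fun_eq_iff mean_sq_def Z_def sum_subtractf power_mult_distrib[symmetric] field_simps)
  show "integrable M (\<lambda>w. (mean_sq j n w - v j)\<^sup>2)"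
    unfolding dev_sq using sum_sq int_Z_sq integral_Z by simp
  have "(\<integral>w. (mean_sq j n w - v j)\<^sup>2 \<partial>M) = (1 / real n)\<^sup>2 * (\<Sum>i\<in>{1..n}. \<integral>w. (Z i w)\<^sup>2 \<partial>M)"
    unfolding dev_sq using sum_sq int_Z_sq integral_Z by simp
  also have "\<dots> \<le> (1 / real n)\<^sup>2 * (\<Sum>i\<in>{1..n}. C * (v j)\<^sup>2)"
    using integral_Z_sq by (intro mult_left_mono sum_mono) auto
  also have "\<dots> = C * (v j)\<^sup>2 / n"
    using n by (simp add: power2_eq_square field_simps)
  finally show "(\<integral>w. (mean_sq j n w - v j)\<^sup>2 \<partial>M) \<le> C * (v j)\<^sup>2 / n" .
qed

lemma prob_Xbar_ge:
  assumes "j \<ge> 1" "n \<ge> 1" "t > 0"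
  shows "prob {w \<in> space M. t \<le> \<bar>Xbar j n w\<bar>} \<le> v j / (n * t\<^sup>2)"
  using second_moment_method[of "Xbar j n" t] assms
  by (simp add: integrable_Xbar_sq integral_Xbar_sq)

lemma prob_mean_sq_dev_ge:
  assumes "j \<ge> 1" "n \<ge> 1" "t > 0"
  shows "prob {w \<in> space M. t \<le> \<bar>mean_sq j n w - v j\<bar>} \<le> C * (v j)\<^sup>2 / (n * t\<^sup>2)"
proof -
  have "prob {w \<in> space M. t \<le> \<bar>mean_sq j n w - v j\<bar>} \<le> (\<integral>w. (mean_sq j n w - v j)\<^sup>2 \<partial>M) / t\<^sup>2"
    using assms by (intro second_moment_method) (auto simp: integrable_mean_sq_dev)
  also have "\<dots> \<le> C * (v j)\<^sup>2 / n / t\<^sup>2"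
    using assms by (intro divide_right_mono integral_mean_sq_dev_le) auto
  finally show ?thesis by simp
qed

end

locale mdp_full = mdp_sample M Y u yhat C
  for M :: "'w measure" and Y :: "nat \<Rightarrow> 'w \<Rightarrow> 'y::{real_inner, banach, second_countable_topology}"
    and u yhat C +
  fixes sv :: "nat \<Rightarrow> real" and p C_p eps1 eps2 :: real
  assumes sv_pos: "\<And>j. j \<ge> 1 \<Longrightarrow> sv j > 0"
    and sv_mono: "\<And>j. j \<ge> 1 \<Longrightarrow> sv (Suc j) \<le> sv j"
    and var_pos: "\<And>j. j \<ge> 1 \<Longrightarrow> v j > 0"
    and var_bound: "\<And>j. j \<ge> 1 \<Longrightarrow> v j \<le> C_p * real j powr (-p)"
    and p: "p > 1" and eps1: "0 < eps1" "eps1 < 1" and eps2: "0 < eps2"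
    and nonvanish: "\<forall>k. \<exists>j\<ge>k. j \<ge> 1 \<and> inner yhat (u j) \<noteq> 0"
begin

abbreviation "mn n \<equiv> mdp_m eps1 n"
abbreviation "Ybarn n w \<equiv> mdp_Ybar (\<lambda>i. Y i w) n"
abbreviation "s2n n w j \<equiv> mdp_s2 u (\<lambda>i. Y i w) n j"
abbreviation "Sn n w \<equiv> mdp_S eps1 u (\<lambda>i. Y i w) n"
abbreviation "dn n w j \<equiv> mdp_d eps1 eps2 sv u (\<lambda>i. Y i w) n j"
abbreviation "deltan n w \<equiv> mdp_delta' eps1 eps2 sv u (\<lambda>i. Y i w) n"
abbreviation "kn n w \<equiv> mdp_k eps1 eps2 sv u (\<lambda>i. Y i w) n"

lemma C_p_pos: "C_p > 0"
  using var_pos[of 1] var_bound[of 1] by simp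

lemma v_le_C_p:
  assumes "j \<ge> 1"
  shows "v j \<le> C_p"
proof -
  have "real j powr (-p) \<le> 1"
    using assms p by (simp add: powr_minus_divide ge_one_powr_ge_zero)
  then have "C_p * real j powr (-p) \<le> C_p * 1"
    using C_p_pos by (intro mult_left_mono) auto
  then show ?thesis
    using var_bound[OF assms] by simp
qed

lemma inner_Ybarn_minus: "n \<ge> 1 \<Longrightarrow> inner (Ybarn n w - yhat) (u j) = Xbar j n w"
  by (simp add: inner_mdp_Ybar_minus Xbar_def X_def)

lemma s2n_eq: "n \<ge> 2 \<Longrightarrow> s2n n w j = real n / (real n - 1) * (mean_sq j n w - (Xbar j n w)\<^sup>2)"
  using mdp_s2_eq[of n u "\<lambda>i. Y i w" j yhat] inner_Ybarn_minus[of n w j]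
  by (simp add: mean_sq_def X_def)

definition Vtot :: real where
  "Vtot = (\<Sum>j. C_p * real j powr (-p))"

definition Ztot :: real where
  "Ztot = (\<Sum>j. real j powr (-(1 + eps2)))"

lemma sum_v_le_Vtot: "(\<Sum>j=1..m. v j) \<le> Vtot"
proof -
  have "summable (\<lambda>j. C_p * real j powr (-p))"
    using p by (intro summable_mult) (simp add: summable_real_powr_iff)
  then have "(\<Sum>j=1..m. C_p * real j powr (-p)) \<le> Vtot"
    unfolding Vtot_def using C_p_pos by (intro sum_le_suminf) auto
  moreover have "(\<Sum>j=1..m. v j) \<le> (\<Sum>j=1..m. C_p * real j powr (-p))"
    using var_bound by (intro sum_mono) auto
  ultimately show ?thesis by linarith
qed

lemma sum_powr_le_Ztot: "finite A \<Longrightarrow> (\<Sum>j\<in>A. real j powr (-(1 + eps2))) \<le> Ztot"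
  unfolding Ztot_def using eps2 by (intro sum_le_suminf) (auto simp: summable_real_powr_iff)

lemma Vtot_pos: "Vtot > 0"
  using sum_v_le_Vtot[of 1] var_pos[of 1] by simp

(* On the good event below, n delta_n'^2 >= c_delta and d_{J,n}^2 >= c_d J, while
   S_n T K n <= 5/2 Vtot eta / n, which eta makes equal to c_delta / (4 n). *)
definition c_delta :: real where
  "c_delta = min (v 1 / 2) (v 1 / (2 * (sv 1)\<^sup>2))"

definition eta :: real where
  "eta = c_delta / (10 * Vtot)"

definition c_d :: "nat \<Rightarrow> real" where
  "c_d J = min (real J powr (-(1 + eps2)) * (v 1 / (5 * C_p))) (1 / (sv 1)\<^sup>2)"

lemma c_delta_pos: "c_delta > 0"
  unfolding c_delta_def using var_pos[of 1] sv_pos[of 1] by simp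

lemma eta_pos: "eta > 0"
  unfolding eta_def using c_delta_pos Vtot_pos by simp

lemma c_d_pos: "J \<ge> 1 \<Longrightarrow> c_d J > 0"
  unfolding c_d_def using var_pos[of 1] C_p_pos sv_pos[of 1] by simp

definition T :: "nat \<Rightarrow> nat \<Rightarrow> 'w \<Rightarrow> real" where
  "T K n w = (\<Sum>j=K..mn n. real j powr (-(1 + eps2)) * (2 / v j) * (Xbar j n w)\<^sup>2)"

definition good :: "nat \<Rightarrow> nat \<Rightarrow> nat \<Rightarrow> 'w \<Rightarrow> bool" where
  "good K J n w \<longleftrightarrow>
     (\<forall>j\<in>{1..mn n}. \<bar>mean_sq j n w - v j\<bar> < v j / 4) \<and>
     (\<forall>j\<in>{1..mn n}. \<bar>Xbar j n w\<bar> < sqrt (v j / 8)) \<and>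
     \<bar>Xbar J n w\<bar> < \<bar>inner yhat (u J)\<bar> / 2 \<and> T K n w < eta / n"

context
  fixes K J n :: nat and w :: 'w
  assumes good: "good K J n w" and n: "n \<ge> 2"
begin

lemma good_s2n_bounds:
  assumes j: "j \<in> {1..mn n}"
  shows "v j / 2 \<le> s2n n w j" and "s2n n w j \<le> 5 / 2 * v j"
proof -
  have "\<bar>Xbar j n w\<bar>\<^sup>2 < (sqrt (v j / 8))\<^sup>2"
    using good j unfolding good_def by (intro power_strict_mono) auto
  then have "(Xbar j n w)\<^sup>2 < v j / 8"
    using var_pos[of j] j by simp
  then show "v j / 2 \<le> s2n n w j" and "s2n n w j \<le> 5 / 2 * v j"
    using scaled_sample_variance_bounds[OF n] good j unfolding good_def s2n_eq[OF n] by auto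
qed

lemma good_s2n_pos: "j \<in> {1..mn n} \<Longrightarrow> s2n n w j > 0"
  using good_s2n_bounds(1)[of j] var_pos[of j] by auto

lemma good_Sn_ge: "1 \<le> mn n \<Longrightarrow> v 1 / 2 \<le> Sn n w"
  using good_s2n_bounds(1)[of 1] member_le_sum[of 1 "{1..mn n}" "s2n n w"]
  by (simp add: mdp_S_def mdp_s2_nonneg)

lemma good_Sn_le: "Sn n w \<le> 5 / 2 * Vtot"
proof -
  have "Sn n w \<le> (\<Sum>j=1..mn n. 5 / 2 * v j)"
    unfolding mdp_S_def using good_s2n_bounds(2) by (intro sum_mono) auto
  also have "\<dots> \<le> 5 / 2 * Vtot"
    using sum_v_le_Vtot[of "mn n"] unfolding sum_distrib_left[symmetric] by simp
  finally show ?thesis .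
qed

lemma good_deltan_sq_le: "(deltan n w)\<^sup>2 \<le> 5 / 2 * Vtot * Ztot / n"
proof -
  have "(\<Sum>j=1..mn n. (dn n w j)\<^sup>2 * s2n n w j) \<le> (\<Sum>j=1..mn n. real j powr (-(1 + eps2)) * Sn n w)"
    by (intro sum_mono mdp_d_sq_mult_s2_le) auto
  also have "\<dots> = (\<Sum>j=1..mn n. real j powr (-(1 + eps2))) * Sn n w"
    by (simp add: sum_distrib_right)
  also have "\<dots> \<le> Ztot * (5 / 2 * Vtot)"
  proof (rule mult_mono)
    show "(\<Sum>j=1..mn n. real j powr (-(1 + eps2))) \<le> Ztot" by (rule sum_powr_le_Ztot) simp
    then show "0 \<le> Ztot" by (meson order_trans powr_ge_zero sum_nonneg)
  qed (use good_Sn_le mdp_S_nonneg in auto)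
  also have "\<dots> = 5 / 2 * Vtot * Ztot" by simp
  finally have "(1 / real n) * (\<Sum>j=1..mn n. (dn n w j)\<^sup>2 * s2n n w j) \<le> (1 / real n) * (5 / 2 * Vtot * Ztot)"
    by (rule mult_left_mono) simp
  then show ?thesis unfolding mdp_delta'_sq by simp
qed

lemma good_deltan_sq_ge:
  assumes "1 \<le> mn n"
  shows "c_delta / n \<le> (deltan n w)\<^sup>2"
proof -
  have s2_pos: "s2n n w 1 > 0" using good_s2n_pos assms by simp
  have "(dn n w 1)\<^sup>2 * s2n n w 1 = min (Sn n w) (s2n n w 1 / (sv 1)\<^sup>2)"
    using mdp_d_sq[of eps1 eps2 sv u "\<lambda>i. Y i w" n 0] s2_pos
    by (simp add: min_div_def min_mult_distrib_right)
  moreover have "v 1 / (2 * (sv 1)\<^sup>2) \<le> s2n n w 1 / (sv 1)\<^sup>2"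
    using divide_right_mono[OF good_s2n_bounds(1)[of 1], of "(sv 1)\<^sup>2"] assms by simp
  ultimately have "c_delta \<le> (dn n w 1)\<^sup>2 * s2n n w 1"
    unfolding c_delta_def using good_Sn_ge assms by linarith
  also have "\<dots> \<le> (\<Sum>j=1..mn n. (dn n w j)\<^sup>2 * s2n n w j)"
    using assms by (intro member_le_sum) (auto simp: mdp_s2_nonneg)
  finally show ?thesis
    unfolding mdp_delta'_sq by (simp add: divide_right_mono)
qed

lemma good_dn_sq_ge:
  assumes J: "1 \<le> J" "J \<le> mn n"
  shows "c_d J \<le> (dn n w J)\<^sup>2"
  unfolding c_d_def
proof (rule mdp_d_sq_ge)
  fix i assume i: "1 \<le> i" "i \<le> J"
  then have i_m: "i \<in> {1..mn n}" using J by auto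
  show "0 < s2n n w i \<and> v 1 / (5 * C_p) \<le> Sn n w / s2n n w i"
  proof
    show "0 < s2n n w i" by (rule good_s2n_pos[OF i_m])
    have "v 1 / (5 * C_p) \<le> (v 1 / 2) / (5 / 2 * v i)"
      using v_le_C_p[of i] i var_pos[of i] var_pos[of 1] C_p_pos
      by (simp add: field_simps mult_left_mono)
    also have "\<dots> \<le> Sn n w / s2n n w i"
      using good_Sn_ge good_s2n_bounds(2)[OF i_m] good_s2n_pos[OF i_m] var_pos[of 1] J
      by (intro frac_le) auto
    finally show "v 1 / (5 * C_p) \<le> Sn n w / s2n n w i" .
  qed
qed (use J var_pos[of 1] C_p_pos eps2 sv_pos sv_mono in auto)

(* The J-th term of the residual sum stays bounded below, while delta_n'^2 = O(1/n). *)
lemma good_kn_ge: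
  assumes J: "1 \<le> J" "J \<le> mn n" and a: "inner yhat (u J) \<noteq> 0"
    and n_big: "real n > 10 * Vtot * Ztot / (c_d J * (inner yhat (u J))\<^sup>2)"
  shows "J \<le> kn n w"
proof (rule mdp_k_ge[OF J(2)])
  let ?a = "inner yhat (u J)"
  have "\<bar>?a\<bar> / 2 \<le> \<bar>Xbar J n w + ?a\<bar>"
    using good unfolding good_def by linarith
  also have "Xbar J n w + ?a = inner (Ybarn n w) (u J)"
    using inner_Ybarn_minus[of n w J] n by (simp add: inner_diff_left)
  finally have "(\<bar>?a\<bar> / 2)\<^sup>2 \<le> \<bar>inner (Ybarn n w) (u J)\<bar>\<^sup>2"
    by (intro power_mono) auto
  then have "?a\<^sup>2 / 4 \<le> (inner (Ybarn n w) (u J))\<^sup>2"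
    by (simp add: power_divide)
  then have "c_d J * (?a\<^sup>2 / 4) \<le> (dn n w J)\<^sup>2 * (inner (Ybarn n w) (u J))\<^sup>2"
    using good_dn_sq_ge[OF J] c_d_pos[OF J(1)] by (intro mult_mono) auto
  moreover have "5 / 2 * Vtot * Ztot / n < c_d J * (?a\<^sup>2 / 4)"
    using n_big n c_d_pos[OF J(1)] a by (simp add: field_simps)
  ultimately show "(deltan n w)\<^sup>2 < (dn n w J)\<^sup>2 * (inner (Ybarn n w) (u J))\<^sup>2"
    using good_deltan_sq_le by linarith
qed

lemma good_tail_le:
  assumes K: "1 \<le> K" "K \<le> mn n"
  shows "(\<Sum>j=K..mn n. (dn n w j)\<^sup>2 * (inner (Ybarn n w - yhat) (u j))\<^sup>2) \<le> (deltan n w)\<^sup>2 / 4"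
proof -
  have "(\<Sum>j=K..mn n. (dn n w j)\<^sup>2 * (inner (Ybarn n w - yhat) (u j))\<^sup>2)
      \<le> (\<Sum>j=K..mn n. Sn n w * (real j powr (-(1 + eps2)) * (2 / v j) * (Xbar j n w)\<^sup>2))"
  proof (intro sum_mono)
    fix j assume "j \<in> {K..mn n}"
    then have j: "j \<in> {1..mn n}" using K by auto
    have "(dn n w j)\<^sup>2 \<le> real j powr (-(1 + eps2)) * Sn n w / s2n n w j"
      using mdp_d_sq_le good_s2n_pos[OF j] j by auto
    also have "\<dots> \<le> real j powr (-(1 + eps2)) * Sn n w / (v j / 2)"
      using good_s2n_bounds(1)[OF j] var_pos[of j] j
      by (intro divide_left_mono mult_nonneg_nonneg mdp_S_nonneg) auto
    also have "\<dots> = Sn n w * (real j powr (-(1 + eps2)) * (2 / v j))"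
      by simp
    finally have "(dn n w j)\<^sup>2 * (Xbar j n w)\<^sup>2 \<le> Sn n w * (real j powr (-(1 + eps2)) * (2 / v j)) * (Xbar j n w)\<^sup>2"
      by (rule mult_right_mono) simp
    then show "(dn n w j)\<^sup>2 * (inner (Ybarn n w - yhat) (u j))\<^sup>2
        \<le> Sn n w * (real j powr (-(1 + eps2)) * (2 / v j) * (Xbar j n w)\<^sup>2)"
      using inner_Ybarn_minus[of n w j] n by (simp add: mult.assoc)
  qed
  also have "\<dots> = Sn n w * T K n w"
    by (simp add: T_def sum_distrib_left)
  also have "\<dots> \<le> 5 / 2 * Vtot * (eta / n)"
    using good good_Sn_le mdp_S_nonneg Vtot_pos unfolding good_def T_def
    by (intro mult_mono) (auto intro!: sum_nonneg mult_nonneg_nonneg simp: v_nonneg)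
  also have "\<dots> = c_delta / n / 4"
    using Vtot_pos by (simp add: eta_def field_simps)
  also have "\<dots> \<le> (deltan n w)\<^sup>2 / 4"
    using good_deltan_sq_ge K by simp
  finally show ?thesis .
qed

end

lemma Ybarn_measurable [measurable]: "(\<lambda>w. Ybarn n w) \<in> borel_measurable M"
  unfolding mdp_Ybar_def using Y_rv by measurable

lemma s2n_measurable [measurable]: "(\<lambda>w. s2n n w j) \<in> borel_measurable M"
  unfolding mdp_s2_def using Y_rv by measurable

lemma Sn_measurable [measurable]: "(\<lambda>w. Sn n w) \<in> borel_measurable M"
  unfolding mdp_S_def by measurable

lemma dn_measurable [measurable]: "(\<lambda>w. dn n w j) \<in> borel_measurable M"
proof (induction j)
  case (Suc j)
  then show ?case unfolding mdp_d.simps min_div_def by measurable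
qed simp

lemma deltan_measurable [measurable]: "(\<lambda>w. deltan n w) \<in> borel_measurable M"
  unfolding mdp_delta'_def by measurable

lemma kn_measurable [measurable]: "(\<lambda>w. kn n w) \<in> measurable M (count_space UNIV)"
  unfolding mdp_k_def by measurable

lemma T_measurable [measurable]: "T K n \<in> borel_measurable M"
  unfolding T_def[abs_def] by measurable

definition target :: "nat \<Rightarrow> 'w \<Rightarrow> bool" where
  "target n w \<longleftrightarrow> sqrt (\<Sum>j = max (kn n w) 1 .. mn n. (dn n w j)\<^sup>2 * (inner (Ybarn n w - yhat) (u j))\<^sup>2)
     \<le> deltan n w / 2"

(* The summation range depends on w; over the fixed range {1..mn n} with a guard the
   measurability is syntactic. *)
lemma target_sets: "{w \<in> space M. target n w} \<in> sets M"
proof -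
  have "(\<Sum>j = max (kn n w) 1 .. mn n. (dn n w j)\<^sup>2 * (inner (Ybarn n w - yhat) (u j))\<^sup>2) =
      (\<Sum>j = 1 .. mn n. (if kn n w \<le> j then (dn n w j)\<^sup>2 * (inner (Ybarn n w - yhat) (u j))\<^sup>2 else 0))"
    for w by (rule sum.mono_neutral_cong_left) auto
  then have "target n w \<longleftrightarrow> sqrt (\<Sum>j = 1 .. mn n. (if kn n w \<le> j then
      (dn n w j)\<^sup>2 * (inner (Ybarn n w - yhat) (u j))\<^sup>2 else 0)) \<le> deltan n w / 2" for w
    unfolding target_def by simp
  then show ?thesis by simp
qed

lemma good_target:
  assumes good: "good K J n w" and n: "n \<ge> 2" and KJ: "1 \<le> K" "K \<le> J" "J \<le> mn n"
    and a: "inner yhat (u J) \<noteq> 0"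
    and n_big: "real n > 10 * Vtot * Ztot / (c_d J * (inner yhat (u J))\<^sup>2)"
  shows "target n w"
proof -
  have "J \<le> kn n w" using good_kn_ge[OF good n] KJ a n_big by auto
  then have "{max (kn n w) 1..mn n} \<subseteq> {K..mn n}" using KJ by auto
  then have "(\<Sum>j = max (kn n w) 1 .. mn n. (dn n w j)\<^sup>2 * (inner (Ybarn n w - yhat) (u j))\<^sup>2)
      \<le> (\<Sum>j = K .. mn n. (dn n w j)\<^sup>2 * (inner (Ybarn n w - yhat) (u j))\<^sup>2)"
    by (intro sum_mono2) auto
  also have "\<dots> \<le> (deltan n w / 2)\<^sup>2"
    using good_tail_le[OF good n] KJ by (simp add: power_divide)
  finally have "sqrt (\<Sum>j = max (kn n w) 1 .. mn n. (dn n w j)\<^sup>2 * (inner (Ybarn n w - yhat) (u j))\<^sup>2)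
      \<le> sqrt ((deltan n w / 2)\<^sup>2)"
    by (rule real_sqrt_le_mono)
  then show ?thesis
    unfolding target_def using mdp_delta'_nonneg[of eps1 eps2 sv u "\<lambda>i. Y i w" n] by simp
qed

lemma prob_T_ge:
  assumes K: "K \<ge> 1" and n: "n \<ge> 1"
  shows "prob {w \<in> space M. eta / n \<le> T K n w} \<le> 2 / eta * (\<Sum>j=K..mn n. real j powr (-(1 + eps2)))"
proof -
  have int: "integrable M (\<lambda>w. real j powr (-(1 + eps2)) * (2 / v j) * (Xbar j n w)\<^sup>2)" if "j \<in> {K..mn n}" for j
    using that K n by (simp add: integrable_Xbar_sq)
  have "(\<integral>w. T K n w \<partial>M) = (\<Sum>j=K..mn n. \<integral>w. real j powr (-(1 + eps2)) * (2 / v j) * (Xbar j n w)\<^sup>2 \<partial>M)"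
    unfolding T_def by (rule Bochner_Integration.integral_sum) (rule int)
  also have "\<dots> = (\<Sum>j=K..mn n. 2 / n * real j powr (-(1 + eps2)))"
  proof (intro sum.cong refl)
    fix j assume "j \<in> {K..mn n}"
    then have "j \<ge> 1" "v j > 0" using K var_pos by auto
    then show "(\<integral>w. real j powr (-(1 + eps2)) * (2 / v j) * (Xbar j n w)\<^sup>2 \<partial>M)
        = 2 / n * real j powr (-(1 + eps2))"
      using n by (simp add: integral_Xbar_sq)
  qed
  also have "\<dots> = 2 / n * (\<Sum>j=K..mn n. real j powr (-(1 + eps2)))"
    by (simp add: sum_distrib_left)
  finally have integral_T: "(\<integral>w. T K n w \<partial>M) = 2 / n * (\<Sum>j=K..mn n. real j powr (-(1 + eps2)))" .
  have "prob {w \<in> space M. eta / n \<le> T K n w} \<le> (\<integral>w. T K n w \<partial>M) / (eta / n)"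
    using int eta_pos n unfolding T_def[abs_def]
    by (intro integral_Markov_inequality_measure[where A="space M"])
      (auto intro!: sum_nonneg mult_nonneg_nonneg simp: v_nonneg)
  also have "\<dots> = 2 / eta * (\<Sum>j=K..mn n. real j powr (-(1 + eps2)))"
    unfolding integral_T using n eta_pos by (simp add: field_simps)
  finally show ?thesis .
qed

lemma prob_not_good_le:
  fixes K J n :: nat and a :: real
  defines "a \<equiv> inner yhat (u J)"
  assumes n: "n \<ge> 1" and K: "K \<ge> 1" and J: "J \<ge> 1" and a: "a \<noteq> 0"
  shows "prob {w \<in> space M. \<not> good K J n w} \<le>
     (16 * C + 8) * (real (mn n) / n) + 4 * v J / (n * a\<^sup>2) + 2 / eta * (\<Sum>j=K..mn n. real j powr (-(1 + eps2)))"
proof -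
  let ?m = "mn n"
  define B1 where "B1 j = {w \<in> space M. v j / 4 \<le> \<bar>mean_sq j n w - v j\<bar>}" for j
  define B2 where "B2 j = {w \<in> space M. sqrt (v j / 8) \<le> \<bar>Xbar j n w\<bar>}" for j
  define B3 where "B3 = {w \<in> space M. \<bar>a\<bar> / 2 \<le> \<bar>Xbar J n w\<bar>}"
  define B4 where "B4 = {w \<in> space M. eta / n \<le> T K n w}"
  have [measurable]: "B1 j \<in> sets M" "B2 j \<in> sets M" "B3 \<in> sets M" "B4 \<in> sets M" for j
    unfolding B1_def B2_def B3_def B4_def by measurable
  have B1: "prob (B1 j) \<le> 16 * C / n" if "j \<in> {1..?m}" for j
    using prob_mean_sq_dev_ge[of j n "v j / 4"] var_pos[of j] that n
    by (simp add: B1_def power2_eq_square field_simps)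
  have B2: "prob (B2 j) \<le> 8 / n" if "j \<in> {1..?m}" for j
    using prob_Xbar_ge[of j n "sqrt (v j / 8)"] var_pos[of j] that n
    by (simp add: B2_def field_simps)
  have B3: "prob B3 \<le> 4 * v J / (n * a\<^sup>2)"
    using prob_Xbar_ge[of J n "\<bar>a\<bar> / 2"] J n a
    by (simp add: B3_def power_divide field_simps)
  have "{w \<in> space M. \<not> good K J n w} \<subseteq> ((\<Union>j\<in>{1..?m}. B1 j) \<union> (\<Union>j\<in>{1..?m}. B2 j)) \<union> (B3 \<union> B4)"
    unfolding good_def B1_def B2_def B3_def B4_def a_def by (auto simp: not_less)
  then have "prob {w \<in> space M. \<not> good K J n w}
      \<le> prob ((\<Union>j\<in>{1..?m}. B1 j) \<union> (\<Union>j\<in>{1..?m}. B2 j)) + prob (B3 \<union> B4)"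
    by (intro order_trans[OF finite_measure_mono measure_Un_le]) auto
  also have "\<dots> \<le> ((\<Sum>j\<in>{1..?m}. prob (B1 j)) + (\<Sum>j\<in>{1..?m}. prob (B2 j))) + (prob B3 + prob B4)"
    by (intro add_mono order_trans[OF measure_Un_le] finite_measure_subadditive_finite measure_Un_le) auto
  also have "\<dots> \<le> ((\<Sum>j\<in>{1..?m}. 16 * C / n) + (\<Sum>j\<in>{1..?m}. 8 / n))
      + (4 * v J / (n * a\<^sup>2) + 2 / eta * (\<Sum>j=K..?m. real j powr (-(1 + eps2))))"
    using B1 B2 B3 prob_T_ge[OF K n] unfolding B4_def by (intro add_mono sum_mono) auto
  also have "\<dots> = (16 * C + 8) * (real ?m / n) + 4 * v J / (n * a\<^sup>2)
      + 2 / eta * (\<Sum>j=K..?m. real j powr (-(1 + eps2)))"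
    by (simp add: algebra_simps add_divide_distrib)
  finally show ?thesis .
qed

lemma good_sets: "{w \<in> space M. good K J n w} \<in> sets M"
  unfolding good_def by measurable

lemma prob_target_ge:
  assumes n: "n \<ge> 2" and KJ: "1 \<le> K" "K \<le> J" "J \<le> mn n" and a: "inner yhat (u J) \<noteq> 0"
    and n_big: "real n > 10 * Vtot * Ztot / (c_d J * (inner yhat (u J))\<^sup>2)"
  shows "1 - prob {w \<in> space M. \<not> good K J n w} \<le> prob {w \<in> space M. target n w}"
proof -
  have "{w \<in> space M. \<not> good K J n w} = space M - {w \<in> space M. good K J n w}" by auto
  then have "1 - prob {w \<in> space M. \<not> good K J n w} = prob {w \<in> space M. good K J n w}"
    using prob_compl[OF good_sets] by simp
  also have "\<dots> \<le> prob {w \<in> space M. target n w}"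
    using good_target[OF _ assms] target_sets by (intro finite_measure_mono) auto
  finally show ?thesis .
qed

lemma tail_sum_powr_small:
  assumes "e > 0"
  obtains K where "K \<ge> 1" "\<And>m. (\<Sum>j=K..m. real j powr (-(1 + eps2))) < e"
proof -
  have "summable (\<lambda>j. real j powr (-(1 + eps2)))"
    using eps2 by (simp add: summable_real_powr_iff)
  then obtain N where N: "\<And>m n. m \<ge> N \<Longrightarrow> norm (\<Sum>j=m..<n. real j powr (-(1 + eps2))) < e"
    using assms unfolding summable_Cauchy by blast
  show ?thesis
  proof
    show "max N 1 \<ge> 1" by simp
    fix m
    show "(\<Sum>j=max N 1..m. real j powr (-(1 + eps2))) < e"
      using N[of "max N 1" "Suc m"] by (simp add: atLeastLessThanSuc_atLeastAtMost)
  qed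
qed

lemma eventually_prob_target_gt:
  assumes r: "r > 0"
  shows "\<forall>\<^sub>F n in sequentially. 1 - r < prob {w \<in> space M. target n w}"
proof -
  obtain K where K: "K \<ge> 1" and tail: "\<And>m. (\<Sum>j=K..m. real j powr (-(1 + eps2))) < r * eta / 4"
    using tail_sum_powr_small[of "r * eta / 4"] r eta_pos by auto
  obtain J where J: "J \<ge> K" "J \<ge> 1" and a: "inner yhat (u J) \<noteq> 0"
    using nonvanish by blast
  let ?a = "inner yhat (u J)" and ?c = "16 * \<bar>C\<bar> + 8"
  have "((\<lambda>n. ?c * real n powr (-eps1) + 4 * v J / ?a\<^sup>2 * (1 / real n)) \<longlongrightarrow> ?c * 0 + 4 * v J / ?a\<^sup>2 * 0) sequentially"
    using eps1 by (intro tendsto_intros tendsto_neg_powr filterlim_real_sequentially) auto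
  then have small: "\<forall>\<^sub>F n in sequentially. ?c * real n powr (-eps1) + 4 * v J / ?a\<^sup>2 * (1 / real n) < r / 2"
    using r by (intro order_tendstoD(2)) auto
  have big: "\<forall>\<^sub>F n in sequentially. 10 * Vtot * Ztot / (c_d J * ?a\<^sup>2) < real n"
    using filterlim_real_sequentially by (simp add: filterlim_at_top_dense)
  from small big eventually_le_mdp_m[OF eps1(2), of J] eventually_ge_at_top[of 2]
  show ?thesis
  proof eventually_elim
    case (elim n)
    let ?m = "mn n"
    have "prob {w \<in> space M. \<not> good K J n w}
        \<le> (16 * C + 8) * (real ?m / n) + 4 * v J / (n * ?a\<^sup>2) + 2 / eta * (\<Sum>j=K..?m. real j powr (-(1 + eps2)))"
      using elim K J a by (intro prob_not_good_le) auto
    also have "\<dots> \<le> ?c * real n powr (-eps1) + 4 * v J / ?a\<^sup>2 * (1 / real n) + 2 / eta * (r * eta / 4)"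
    proof -
      have "(16 * C + 8) * (real ?m / n) \<le> ?c * (real ?m / n)" by (intro mult_right_mono) auto
      also have "\<dots> \<le> ?c * real n powr (-eps1)" using elim by (intro mult_left_mono mdp_m_div_le) auto
      finally have "(16 * C + 8) * (real ?m / n) \<le> ?c * real n powr (-eps1)" .
      moreover have "2 / eta * (\<Sum>j=K..?m. real j powr (-(1 + eps2))) \<le> 2 / eta * (r * eta / 4)"
        using tail[of ?m] eta_pos by (intro mult_left_mono) auto
      moreover have "4 * v J / (n * ?a\<^sup>2) = 4 * v J / ?a\<^sup>2 * (1 / real n)" by simp
      ultimately show ?thesis by linarith
    qed
    also have "\<dots> < r" using elim eta_pos by simp
    finally show ?case
      using prob_target_ge[of n K J] elim K J a by linarith
  qed
qed

theorem prob_target_tendsto_1: "(\<lambda>n. prob {w \<in> space M. target n w}) \<longlonglongrightarrow> 1"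
proof (rule order_tendstoI)
  fix x :: real assume "x < 1"
  then show "\<forall>\<^sub>F n in sequentially. x < prob {w \<in> space M. target n w}"
    using eventually_prob_target_gt[of "1 - x"] by simp
next
  fix x :: real assume "1 < x"
  then show "\<forall>\<^sub>F n in sequentially. prob {w \<in> space M. target n w} < x"
    by (intro always_eventually allI le_less_trans[OF prob_le_1])
qed

end

theorem lemma2:
  fixes K :: "'x::{real_inner, banach, second_countable_topology} \<Rightarrow> 'y::{real_inner, banach, second_countable_topology}"
    and sv :: "nat \<Rightarrow> real" and vx :: "nat \<Rightarrow> 'x" and u :: "nat \<Rightarrow> 'y"
    and M :: "'w measure" and Y :: "nat \<Rightarrow> 'w \<Rightarrow> 'y"
    and xhat :: 'x and yhat :: 'y and xi :: 'x
    and p q C_p C c1 c2 eps1 eps2 nu rho :: real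
  assumes K_compact: "compact_op K"
    and K_dense: "closure (range K) = UNIV"
    and sigma_pos: "\<forall>j\<ge>1. sv j > 0"
    and sigma_mono: "\<forall>j\<ge>1. sv (Suc j) \<le> sv j"
    and sigma_lim: "sv \<longlonglongrightarrow> 0"
    and vx_on: "orthonormal_seq vx" and u_on: "orthonormal_seq u"
    and K_v: "\<forall>j\<ge>1. K (vx j) = sv j *\<^sub>R u j"
    and K_svd: "\<forall>x. ((\<lambda>j. (sv j * inner x (vx j)) *\<^sub>R u j) has_sum K x) {1..}"
    and yhat_def: "yhat = K xhat"
    and PS: "prob_space M"
    and Y_rv: "\<forall>i\<ge>1. Y i \<in> borel_measurable M"
    and Y_indep: "prob_space.indep_vars M (\<lambda>_. borel) Y {1..}"
    and Y_ident: "\<forall>i\<ge>1. distr M borel (Y i) = distr M borel (Y 1)"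
    and Y_int: "integrable M (Y 1)"
    and Y_mean: "integral\<^sup>L M (Y 1) = yhat"
    and pq: "q > p - 1" "p - 1 > 0"
    and c12: "c1 > 0" "c2 > 0"
    and sigma_rate: "\<forall>j\<ge>1. c1 * real j powr (-q) \<le> (sv j)\<^sup>2 \<and> (sv j)\<^sup>2 \<le> c2 * real j powr (-q)"
    and fourth_int: "\<forall>j\<ge>1. integrable M (\<lambda>w. (inner (Y 1 w - yhat) (u j)) ^ 4)"
    and var_pos: "\<forall>j\<ge>1. 0 < (\<integral>w. (inner (Y 1 w - yhat) (u j))\<^sup>2 \<partial>M)"
    and var_bound: "\<forall>j\<ge>1. (\<integral>w. (inner (Y 1 w - yhat) (u j))\<^sup>2 \<partial>M) \<le> C_p * real j powr (-p)"
    and fourth_bound: "\<forall>j\<ge>1. (\<integral>w. (inner (Y 1 w - yhat) (u j)) ^ 4 \<partial>M)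
                         \<le> C * (\<integral>w. (inner (Y 1 w - yhat) (u j))\<^sup>2 \<partial>M)\<^sup>2"
    and eps1: "0 < eps1" "eps1 < 1"
    and eps2: "0 < eps2" "eps2 < min 1 (p - 1)"
    and nu_rho: "nu > 0" "rho > 0"
    and xi_norm: "norm xi \<le> rho"
    and xhat_src: "((\<lambda>j. (sv j powr nu * inner xi (vx j)) *\<^sub>R vx j) has_sum xhat) {1..}"
    and nonvanish: "\<forall>k. \<exists>j\<ge>k. j \<ge> 1 \<and> inner yhat (u j) \<noteq> 0"
  shows "(\<lambda>n. measure M {w \<in> space M.
            sqrt (\<Sum>j = max (mdp_k eps1 eps2 sv u (\<lambda>i. Y i w) n) 1 .. mdp_m eps1 n.
                    (mdp_d eps1 eps2 sv u (\<lambda>i. Y i w) n j)\<^sup>2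
                    * (inner (mdp_Ybar (\<lambda>i. Y i w) n - yhat) (u j))\<^sup>2)
            \<le> mdp_delta' eps1 eps2 sv u (\<lambda>i. Y i w) n / 2})
         \<longlonglongrightarrow> 1"
proof -
  interpret sample: mdp_sample M Y u yhat C
    using PS Y_rv Y_indep Y_ident Y_int Y_mean fourth_int fourth_bound
    by (intro mdp_sample.intro mdp_sample_axioms.intro) blast+
  interpret mdp_full M Y u yhat C sv p C_p eps1 eps2
  proof (intro mdp_full.intro mdp_full_axioms.intro sample.mdp_sample_axioms)
  qed (use sigma_pos sigma_mono var_pos var_bound pq eps1 eps2 nonvanish in \<open>auto simp: sample.v_def sample.X_def\<close>)
  show ?thesis
    using prob_target_tendsto_1 unfolding target_def .
qed

end
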